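(* Let $N\ge1$, $f:\mathbb{N}^N\to\mathbb{N}$, $p$ a prime, and $k=\sum_{j=0}^r k_jp^j$ with $0\le k_j<p$. Let $\boldsymbol{\ell}\in\mathbb{N}^N$. Then $$\binom{k}{\boldsymbol{\ell}}_f\equiv\sum_{(\mathbf{m}_0,\dots,\mathbf{m}_r)}\prod_{i=0}^r\binom{k_i}{\mathbf{m}_i}_f\pmod p,$$ where the sum is over all $(\mathbf{m}_0,\dots,\mathbf{m}_r)\in(\mathbb{N}^N)^{r+1}$ with $\mathbf{m}_0+\mathbf{m}_1p+\cdots+\mathbf{m}_rp^r=\boldsymbol{\ell}$.
   Context: $\mathbb{N}=\{0,1,2,\dots\}$. For $k\ge0$ and $\mathbf{x}\in\mathbb{N}^N$, $\binom{k}{\mathbf{x}}_f=\sum_{\mathbf{m}_1+\cdots+\mathbf{m}_k=\mathbf{x}} f(\mathbf{m}_1)\cdots f(\mathbf{m}_k)$ over tuples of vectors in $\mathbb{N}^N$. *)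

theory Defs
  imports Main "HOL-Number_Theory.Cong" "HOL-Computational_Algebra.Primes"
begin

text \<open>Vectors in \<open>\<nat>^N\<close> are represented as lists of naturals of length N.
  Componentwise sum of a list of such vectors (the empty sum is the zero vector):\<close>
definition vsum :: "nat \<Rightarrow> nat list list \<Rightarrow> nat list" where
  "vsum N ms = map (\<lambda>i. \<Sum>m\<leftarrow>ms. m ! i) [0..<N]"

definition vscale :: "nat \<Rightarrow> nat list \<Rightarrow> nat list" where
  "vscale c v = map (\<lambda>a. c * a) v"

definition natvecs :: "nat \<Rightarrow> nat list set" where
  "natvecs N = {v. length v = N}"

text \<open>Generalized multinomial coefficient
  \<open>binom k x _f = \<Sum>_{m_1+...+m_k = x} f(m_1)...f(m_k)\<close>, the sum over k-tuples of vectors in \<open>\<nat>^N\<close>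
  (k-tuples represented as lists of length k).\<close>
definition gbinom :: "nat \<Rightarrow> (nat list \<Rightarrow> nat) \<Rightarrow> nat \<Rightarrow> nat list \<Rightarrow> nat" where
  "gbinom N f k x =
     (\<Sum>ms \<in> {ms. length ms = k \<and> set ms \<subseteq> natvecs N \<and> vsum N ms = x}.
        \<Prod>m\<leftarrow>ms. f m)"

end

theory Submission
  imports Defs "HOL-Combinatorics.Orbits" "HOL-Number_Theory.Residues"
begin

text \<open>Write \<open>k = c + p a\<close>. Shifting the last \<open>p a\<close> entries of a \<open>k\<close>-tuple cyclically by \<open>a\<close> is a
  permutation of order dividing \<open>p\<close> that preserves both the sum of the tuple and its weight
  \<open>\<Prod> f(m\<^sub>i)\<close>. Orbits of non-fixed tuples have exactly \<open>p\<close> elements, so modulo \<open>p\<close> only the fixed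
  tuples count. These are \<open>pre @ w @ \<dots> @ w\<close> (\<open>p\<close> copies of an \<open>a\<close>-tuple \<open>w\<close>), with sum
  \<open>\<Sigma>pre + p \<Sigma>w\<close> and weight \<open>f(pre) f(w)\<^sup>p \<equiv> f(pre) f(w)\<close> by Fermat. Hence
  \<open>binom (c + p a) x \<equiv> \<Sum>\<^bsub>u + p v = x\<^esub> binom c u \<cdot> binom a v\<close>, and induction on the number of
  digits of \<open>k\<close> gives the theorem.\<close>

lemma cong_pow_prime_self:
  fixes b :: nat
  assumes "prime p"
  shows "[b ^ p = b] (mod p)"
proof (cases "p dvd b")
  case True
  then have "p dvd b ^ p"
    using assms prime_gt_0_nat dvd_power dvd_trans by blast
  with True show ?thesis
    by (simp add: cong_def dvd_eq_mod_eq_0)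
next
  case False
  have "[b ^ (p - 1) * b = 1 * b] (mod p)"
    using fermat_theorem[OF assms False] by (rule cong_mult) simp
  moreover have "b ^ (p - 1) * b = b ^ p"
    using prime_gt_0_nat[OF assms] by (simp flip: power_Suc2)
  ultimately show ?thesis by simp
qed

lemma funpow_dist1_self_eq_prime:
  assumes "prime p" "(\<sigma> ^^ p) s = s" "\<sigma> s \<noteq> s"
  shows "funpow_dist1 \<sigma> s s = p"
proof -
  define d where "d = funpow_dist1 \<sigma> s s"
  have "s \<in> orbit \<sigma> s"
    using assms prime_gt_0_nat by (auto simp: orbit_altdef intro!: exI[of _ p])
  then have d: "(\<sigma> ^^ d) s = s"
    unfolding d_def by (rule funpow_dist1_prop)
  have "(\<sigma> ^^ (p mod d)) s = s"
    using funpow_mod_eq[OF d, of p] assms(2) by simp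
  then have "p mod d = 0"
    using funpow_dist1_least[of "p mod d" \<sigma> s s] d_def by (metis mod_less_divisor zero_less_Suc neq0_conv)
  moreover have "d \<noteq> 1"
    using d assms(3) by auto
  ultimately show ?thesis
    using assms(1) d_def by (auto simp: prime_nat_iff)
qed

lemma prime_dvd_sum_free_orbits:
  fixes \<sigma> :: "'a \<Rightarrow> 'a" and w :: "'a \<Rightarrow> nat"
  assumes "prime p" "finite T" "\<sigma> ` T \<subseteq> T"
    and period: "\<And>s. s \<in> T \<Longrightarrow> (\<sigma> ^^ p) s = s \<and> \<sigma> s \<noteq> s"
    and invariant: "\<And>s. s \<in> T \<Longrightarrow> w (\<sigma> s) = w s"
  shows "p dvd sum w T"
proof -
  have self: "s \<in> orbit \<sigma> s" if "s \<in> T" for s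
    using period[OF that] prime_gt_0_nat[OF assms(1)] by (auto simp: orbit_altdef intro!: exI[of _ p])
  have orbit_in: "t \<in> T \<and> w t = w s" if "s \<in> T" "t \<in> orbit \<sigma> s" for s t
    using that(2) by induction (use that(1) assms(3) invariant in auto)
  have orbit_dvd: "p dvd sum w (orbit \<sigma> s)" if "s \<in> T" for s
  proof -
    have "funpow_dist1 \<sigma> s s = p"
      using period[OF that] by (intro funpow_dist1_self_eq_prime[OF assms(1)]) auto
    then have "orbit \<sigma> s = (\<lambda>n. (\<sigma> ^^ n) s) ` {0..<p}" "inj_on (\<lambda>n. (\<sigma> ^^ n) s) {0..<p}"
      using orbit_conv_funpow_dist1[OF self[OF that]] inj_on_funpow_dist1[OF self[OF that]] by simp_all
    moreover have "w ((\<sigma> ^^ n) s) = w s" for n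
      using orbit_in[OF that] funpow_in_orbit[OF self[OF that]] by blast
    ultimately show ?thesis
      by (simp add: sum.reindex)
  qed
  have partition: "T = \<Union> (orbit \<sigma> ` T)"
    using self orbit_in by blast
  have disjoint: "A \<inter> B = {}" if "A \<in> orbit \<sigma> ` T" "B \<in> orbit \<sigma> ` T" "A \<noteq> B" for A B
  proof -
    have "orbit \<sigma> y = orbit \<sigma> s" if "s \<in> T" "y \<in> orbit \<sigma> s" for s y
      using orbit_cyclic_eq3[OF cyclic_on_singleI[OF self[OF that(1)] refl] that(2)] .
    then show ?thesis
      using that by blast
  qed
  have finite: "finite A" if "A \<in> orbit \<sigma> ` T" for A
    using that orbit_in assms(2) by (auto intro: finite_subset)
  have "sum w (\<Union> (orbit \<sigma> ` T)) = (\<Sum>A\<in>orbit \<sigma> ` T. sum w A)"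
    using finite disjoint by (intro sum.Union_disjoint[unfolded comp_apply]) blast+
  then have "sum w T = (\<Sum>A\<in>orbit \<sigma> ` T. sum w A)"
    using partition by simp
  then show ?thesis
    using orbit_dvd by (auto intro: dvd_sum)
qed

lemma sum_cong_fixed_points:
  fixes \<sigma> :: "'a \<Rightarrow> 'a" and w :: "'a \<Rightarrow> nat"
  assumes "prime p" "finite S" "\<sigma> ` S \<subseteq> S"
    and period: "\<And>s. s \<in> S \<Longrightarrow> (\<sigma> ^^ p) s = s"
    and invariant: "\<And>s. s \<in> S \<Longrightarrow> w (\<sigma> s) = w s"
  shows "[sum w S = sum w {s \<in> S. \<sigma> s = s}] (mod p)"
proof -
  define T where "T = {s \<in> S. \<sigma> s \<noteq> s}"
  have "sum w S = sum w ({s \<in> S. \<sigma> s = s} \<union> T)"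
    by (rule arg_cong[where f = "sum w"]) (auto simp: T_def)
  also have "\<dots> = sum w {s \<in> S. \<sigma> s = s} + sum w T"
    using assms(2) by (intro sum.union_disjoint) (auto simp: T_def)
  finally have "sum w S = sum w {s \<in> S. \<sigma> s = s} + sum w T" .
  moreover have "\<sigma> s \<in> T" if "s \<in> T" for s
  proof -
    have "(\<sigma> ^^ n) s = s" if "\<sigma> s = s" for n :: nat and s
      using that by (induction n) auto
    moreover have "(\<sigma> ^^ p) s = (\<sigma> ^^ (p - 1)) (\<sigma> s)"
      using prime_gt_0_nat[OF assms(1)] by (metis Suc_diff_1 funpow_Suc_right o_apply)
    ultimately show ?thesis
      using that period assms(3) by (auto simp: T_def)
  qed
  then have "p dvd sum w T"
    using assms(2) period invariant
    by (intro prime_dvd_sum_free_orbits[where \<sigma> = \<sigma>, OF assms(1)]) (auto simp: T_def)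
  ultimately show ?thesis
    by (auto simp: cong_def)
qed

lemma mset_rotate: "mset (rotate n xs) = mset xs"
  by (metis append_take_drop_id mset_append rotate_drop_take union_commute)

lemma concat_replicate_if_append_commute:
  assumes "xs @ ys = ys @ xs" "length xs = n * length ys"
  shows "xs = concat (replicate n ys)"
  using assms
proof (induction n arbitrary: xs)
  case 0
  then show ?case by simp
next
  case (Suc n)
  then have "take (length ys) xs = ys"
    by (metis append_eq_conv_conj le_add1 mult_Suc take_append take_all_iff)
  then obtain xs' where xs: "xs = ys @ xs'"
    by (metis append_take_drop_id)
  with Suc.prems have "xs' @ ys = ys @ xs'" "length xs' = n * length ys"
    by auto
  with xs Suc.IH show ?case
    by simp
qed

lemma rotate_concat_replicate: "rotate (length w) (concat (replicate n w)) = concat (replicate n w)"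
proof (cases n)
  case (Suc m)
  have "rotate (length w) (w @ concat (replicate m w)) = concat (replicate m w @ [w])"
    by (simp add: rotate_append)
  then show ?thesis
    by (simp add: Suc replicate_append_same)
qed simp

lemma rotate_eq_self_iff_concat_replicate:
  assumes "length xs = n * a" "n > 0"
  shows "rotate a xs = xs \<longleftrightarrow> xs = concat (replicate n (take a xs))"
proof
  have a: "length (take a xs) = a"
    using assms by simp
  then show "xs = concat (replicate n (take a xs)) \<Longrightarrow> rotate a xs = xs"
    by (metis rotate_concat_replicate)
  assume "rotate a xs = xs"
  then have "drop a xs @ take a xs = take a xs @ drop a xs"
    using rotate_append[of "take a xs" "drop a xs"] a by simp
  moreover have "length (drop a xs) = (n - 1) * length (take a xs)"
    using assms a by (simp add: diff_mult_distrib)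
  ultimately have "drop a xs = concat (replicate (n - 1) (take a xs))"
    by (rule concat_replicate_if_append_commute)
  then show "xs = concat (replicate n (take a xs))"
    using assms(2) by (metis append_take_drop_id Suc_diff_1 concat.simps(2) replicate_Suc)
qed

definition vec_compositions :: "nat \<Rightarrow> nat \<Rightarrow> nat list \<Rightarrow> nat list list set" where
  "vec_compositions N k x = {ms. length ms = k \<and> set ms \<subseteq> natvecs N \<and> vsum N ms = x}"

definition vec_splits :: "nat \<Rightarrow> nat \<Rightarrow> nat list \<Rightarrow> (nat list \<times> nat list) set" where
  "vec_splits N p x = {(u, v). u \<in> natvecs N \<and> v \<in> natvecs N \<and> (\<forall>j<N. u ! j + p * v ! j = x ! j)}"

definition base_vsum :: "nat \<Rightarrow> nat \<Rightarrow> nat list list \<Rightarrow> nat list" where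
  "base_vsum N p ms = vsum N (map (\<lambda>i. vscale (p ^ i) (ms ! i)) [0..<length ms])"

definition base_decompositions :: "nat \<Rightarrow> nat \<Rightarrow> nat \<Rightarrow> nat list \<Rightarrow> nat list list set" where
  "base_decompositions N p r l = {ms. length ms = Suc r \<and> set ms \<subseteq> natvecs N \<and> base_vsum N p ms = l}"

lemma gbinom_altdef: "gbinom N f k x = (\<Sum>ms\<in>vec_compositions N k x. \<Prod>m\<leftarrow>ms. f m)"
  by (simp add: gbinom_def vec_compositions_def)

lemma vsum_eq_iff: "vsum N ms = x \<longleftrightarrow> x \<in> natvecs N \<and> (\<forall>j<N. (\<Sum>m\<leftarrow>ms. m ! j) = x ! j)"
  by (auto simp: vsum_def natvecs_def list_eq_iff_nth_eq)

lemma natvecs_eq_iff: "x \<in> natvecs N \<Longrightarrow> y \<in> natvecs N \<Longrightarrow> x = y \<longleftrightarrow> (\<forall>j<N. x ! j = y ! j)"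
  by (auto simp: natvecs_def list_eq_iff_nth_eq)

lemma vsum_in_natvecs: "vsum N ms \<in> natvecs N"
  by (simp add: vsum_def natvecs_def)

lemma nth_vsum: "j < N \<Longrightarrow> vsum N ms ! j = (\<Sum>m\<leftarrow>ms. m ! j)"
  by (simp add: vsum_def)

lemma vsum_mset_eq: "mset ms = mset ms' \<Longrightarrow> vsum N ms = vsum N ms'"
  unfolding vsum_def by (simp flip: sum_mset_sum_list)

lemma base_vsum_in_natvecs: "base_vsum N p ms \<in> natvecs N"
  by (simp add: base_vsum_def vsum_in_natvecs)

lemma nth_base_vsum:
  assumes "set ms \<subseteq> natvecs N" "j < N"
  shows "base_vsum N p ms ! j = (\<Sum>i<length ms. p ^ i * ms ! i ! j)"
proof -
  have "base_vsum N p ms ! j = (\<Sum>i\<leftarrow>[0..<length ms]. vscale (p ^ i) (ms ! i) ! j)"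
    using assms(2) by (simp add: base_vsum_def nth_vsum comp_def)
  also have "\<dots> = (\<Sum>i<length ms. vscale (p ^ i) (ms ! i) ! j)"
    by (simp only: interv_sum_list_conv_sum_set_nat set_upt atLeast0LessThan)
  also have "\<dots> = (\<Sum>i<length ms. p ^ i * ms ! i ! j)"
  proof (rule sum.cong)
    fix i
    assume "i \<in> {..<length ms}"
    then have "length (ms ! i) = N"
      using assms(1) nth_mem by (fastforce simp: natvecs_def)
    then show "vscale (p ^ i) (ms ! i) ! j = p ^ i * ms ! i ! j"
      using assms(2) by (simp add: vscale_def)
  qed simp
  finally show ?thesis .
qed

lemma nth_base_vsum_Cons:
  assumes "u \<in> natvecs N" "set ms \<subseteq> natvecs N" "j < N"
  shows "base_vsum N p (u # ms) ! j = u ! j + p * base_vsum N p ms ! j"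
  using assms
  by (simp add: nth_base_vsum sum.lessThan_Suc_shift sum_distrib_left mult.assoc del: sum.lessThan_Suc)

lemma finite_bounded_vecs: "finite {v \<in> natvecs N. \<forall>j<N. v ! j \<le> b j}"
proof (rule finite_subset)
  show "{v \<in> natvecs N. \<forall>j<N. v ! j \<le> b j} \<subseteq> {v. set v \<subseteq> {..Max (b ` {..<N})} \<and> length v = N}"
  proof
    fix v
    assume v: "v \<in> {v \<in> natvecs N. \<forall>j<N. v ! j \<le> b j}"
    have "v ! j \<le> Max (b ` {..<N})" if "j < N" for j
      using v that by (auto intro: le_trans[OF _ Max_ge])
    with v show "v \<in> {v. set v \<subseteq> {..Max (b ` {..<N})} \<and> length v = N}"
      by (auto simp: natvecs_def in_set_conv_nth)
  qed
qed (simp add: finite_lists_length_eq)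

lemma finite_bounded_vec_lists:
  "finite {ms. length ms = k \<and> (\<forall>m\<in>set ms. m \<in> natvecs N \<and> (\<forall>j<N. m ! j \<le> b j))}"
  using finite_lists_length_eq[OF finite_bounded_vecs, of N b k]
  by (rule rev_finite_subset) auto

lemma finite_vec_compositions: "finite (vec_compositions N k x)"
proof -
  have "m ! j \<le> x ! j" if "ms \<in> vec_compositions N k x" "m \<in> set ms" "j < N" for ms m j
  proof -
    have "m ! j \<le> (\<Sum>m\<leftarrow>ms. m ! j)"
      using that(2) by (intro member_le_sum_list) auto
    also have "\<dots> = x ! j"
      using that(1,3) by (simp add: vec_compositions_def vsum_eq_iff)
    finally show ?thesis .
  qed
  then show ?thesis
    by (intro finite_subset[OF _ finite_bounded_vec_lists[of k N "(!) x"]])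
      (auto simp: vec_compositions_def)
qed

lemma finite_vec_splits:
  assumes "p > 0"
  shows "finite (vec_splits N p x)"
proof -
  define B where "B = {v \<in> natvecs N. \<forall>j<N. v ! j \<le> x ! j}"
  have "u ! j \<le> x ! j \<and> v ! j \<le> x ! j" if "(u, v) \<in> vec_splits N p x" "j < N" for u v j
  proof -
    have "u ! j + p * v ! j = x ! j"
      using that by (simp add: vec_splits_def)
    moreover have "v ! j \<le> p * v ! j"
      using assms by simp
    ultimately show ?thesis
      by linarith
  qed
  then have "vec_splits N p x \<subseteq> B \<times> B"
    by (auto simp: vec_splits_def B_def)
  moreover have "finite (B \<times> B)"
    unfolding B_def using finite_bounded_vecs by blast
  ultimately show ?thesis
    by (rule finite_subset)
qed

lemma finite_base_decompositions:
  assumes "p > 0"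
  shows "finite (base_decompositions N p r l)"
proof -
  have "m ! j \<le> l ! j"
    if ms: "ms \<in> base_decompositions N p r l" and "m \<in> set ms" "j < N" for ms m j
  proof -
    obtain i where i: "i < length ms" "m = ms ! i"
      using \<open>m \<in> set ms\<close> by (auto simp: in_set_conv_nth)
    have "m ! j \<le> p ^ i * ms ! i ! j"
      using assms i(2) by simp
    also have "\<dots> \<le> (\<Sum>i<length ms. p ^ i * ms ! i ! j)"
      using i(1) by (intro member_le_sum) auto
    also have "\<dots> = l ! j"
      using ms \<open>j < N\<close> by (auto simp: base_decompositions_def nth_base_vsum)
    finally show ?thesis .
  qed
  then show ?thesis
    by (intro finite_subset[OF _ finite_bounded_vec_lists[of "Suc r" N "(!) l"]])
      (auto simp: base_decompositions_def)
qed

lemma base_decompositions_0: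
  assumes "l \<in> natvecs N"
  shows "base_decompositions N p 0 l = {[l]}"
proof -
  have "base_vsum N p [m] = m" if "m \<in> natvecs N" for m
    using that natvecs_eq_iff[OF base_vsum_in_natvecs that, of p "[m]"] by (simp add: nth_base_vsum)
  then show ?thesis
    using assms by (auto simp: base_decompositions_def length_Suc_conv)
qed

lemma sum_base_decompositions_Suc:
  assumes "p > 0" "l \<in> natvecs N"
  shows "(\<Sum>ms\<in>base_decompositions N p (Suc r) l. g ms) =
         (\<Sum>(u, v)\<in>vec_splits N p l. \<Sum>ms\<in>base_decompositions N p r v. g (u # ms))"
proof -
  have Cons_mem: "u # ms \<in> base_decompositions N p (Suc r) l \<longleftrightarrow>
      (u, base_vsum N p ms) \<in> vec_splits N p l \<and> ms \<in> base_decompositions N p r (base_vsum N p ms)"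
    for u ms
    using assms(2) natvecs_eq_iff[OF base_vsum_in_natvecs assms(2), of p "u # ms"]
    by (auto simp: base_decompositions_def vec_splits_def base_vsum_in_natvecs nth_base_vsum_Cons)
  define T where "T = (SIGMA (u, v):vec_splits N p l. base_decompositions N p r v)"
  have T_iff: "((u, v), ms) \<in> T \<longleftrightarrow> v = base_vsum N p ms \<and> u # ms \<in> base_decompositions N p (Suc r) l"
    for u v ms
    using Cons_mem[of u ms] unfolding T_def by (auto simp: base_decompositions_def)
  have "inj_on (\<lambda>((u, v), ms). u # ms) T"
    by (auto simp: inj_on_def T_iff)
  moreover have "base_decompositions N p (Suc r) l = (\<lambda>((u, v), ms). u # ms) ` T"
  proof (intro Set.set_eqI iffI)
    fix ms
    assume ms: "ms \<in> base_decompositions N p (Suc r) l"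
    then obtain u ms' where "ms = u # ms'"
      by (auto simp: base_decompositions_def length_Suc_conv)
    with ms show "ms \<in> (\<lambda>((u, v), ms). u # ms) ` T"
      by (auto simp: T_iff intro!: image_eqI[where x = "((u, base_vsum N p ms'), ms')"])
  qed (auto simp: T_iff)
  ultimately have "(\<Sum>ms\<in>base_decompositions N p (Suc r) l. g ms) = (\<Sum>((u, v), ms)\<in>T. g (u # ms))"
    by (simp add: sum.reindex split_def)
  also have "\<dots> = (\<Sum>(u, v)\<in>vec_splits N p l. \<Sum>ms\<in>base_decompositions N p r v. g (u # ms))"
    using assms(1) by (simp add: T_def sum.Sigma finite_vec_splits finite_base_decompositions split_def)
  finally show ?thesis .
qed

lemma nth_vsum_append_concat_replicate:
  "j < N \<Longrightarrow> vsum N (pre @ concat (replicate p w)) ! j = vsum N pre ! j + p * vsum N w ! j"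
  by (induction p) (simp_all add: nth_vsum)

lemma sum_rotation_fixed_vec_compositions:
  assumes "p > 0" "x \<in> natvecs N"
  shows "(\<Sum>ms | ms \<in> vec_compositions N (c + p * a) x \<and> rotate a (drop c ms) = drop c ms. g ms) =
    (\<Sum>((u, v), pre, w)\<in>(SIGMA (u, v):vec_splits N p x. vec_compositions N c u \<times> vec_compositions N a v).
       g (pre @ concat (replicate p w)))"
proof -
  define P where "P = (SIGMA (u, v):vec_splits N p x. vec_compositions N c u \<times> vec_compositions N a v)"
  define glue :: "(nat list \<times> nat list) \<times> nat list list \<times> nat list list \<Rightarrow> nat list list"
    where "glue = (\<lambda>((u, v), pre, w). pre @ concat (replicate p w))"
  have split_iff: "(vsum N pre, vsum N w) \<in> vec_splits N p x \<longleftrightarrow> vsum N (pre @ concat (replicate p w)) = x"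
    for pre w
    using natvecs_eq_iff[OF vsum_in_natvecs assms(2)]
    by (simp add: vec_splits_def vsum_in_natvecs nth_vsum_append_concat_replicate)
  have P_iff: "((u, v), pre, w) \<in> P \<longleftrightarrow>
      u = vsum N pre \<and> v = vsum N w \<and> length pre = c \<and> length w = a \<and>
      set pre \<subseteq> natvecs N \<and> set w \<subseteq> natvecs N \<and> vsum N (pre @ concat (replicate p w)) = x"
    for u v pre w
    by (auto simp: P_def vec_compositions_def simp flip: split_iff)
  define cut where
    "cut ms = ((vsum N (take c ms), vsum N (take a (drop c ms))), take c ms, take a (drop c ms))" for ms
  have cut_glue: "cut (glue z) = z" if "z \<in> P" for z
  proof -
    obtain u v pre w where z: "z = ((u, v), pre, w)"
      by (metis prod.exhaust)
    have "take (length w) (concat (replicate p w)) = w"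
      using assms(1) by (cases p) simp_all
    then show ?thesis
      using that by (auto simp: z glue_def cut_def P_iff)
  qed
  then have "inj_on glue P"
    by (rule inj_on_inverseI)
  moreover have "glue z \<in> vec_compositions N (c + p * a) x \<and> rotate a (drop c (glue z)) = drop c (glue z)"
    if "z \<in> P" for z
  proof -
    obtain u v pre w where z: "z = ((u, v), pre, w)"
      by (metis prod.exhaust)
    have "set (concat (replicate p w)) \<subseteq> set w"
      by auto
    then show ?thesis
      using that rotate_concat_replicate[of w p]
      by (auto simp: z glue_def P_iff vec_compositions_def length_concat sum_list_replicate)
  qed
  moreover have "ms \<in> glue ` P"
    if ms: "ms \<in> vec_compositions N (c + p * a) x" and fixed: "rotate a (drop c ms) = drop c ms" for ms
  proof -
    have len: "length (drop c ms) = p * a"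
      using ms by (simp add: vec_compositions_def)
    then have "glue (cut ms) = ms"
      using rotate_eq_self_iff_concat_replicate[OF len assms(1)] fixed
      by (simp add: glue_def cut_def)
    moreover have "cut ms \<in> P"
      using ms len assms(1) \<open>glue (cut ms) = ms\<close>
      by (auto simp: cut_def P_iff glue_def vec_compositions_def dest: in_set_takeD in_set_dropD)
    ultimately show ?thesis
      by (metis image_eqI)
  qed
  ultimately have "{ms. ms \<in> vec_compositions N (c + p * a) x \<and> rotate a (drop c ms) = drop c ms} = glue ` P"
    by blast
  with \<open>inj_on glue P\<close> show ?thesis
    by (simp add: sum.reindex glue_def P_def split_def)
qed

lemma gbinom_add_prime_mult_cong:
  assumes p: "prime p" and x: "x \<in> natvecs N"
  shows "[gbinom N f (c + p * a) x =
          (\<Sum>(u, v)\<in>vec_splits N p x. gbinom N f c u * gbinom N f a v)] (mod p)"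
proof -
  have p0: "p > 0"
    using p by (rule prime_gt_0_nat)
  define S where "S = vec_compositions N (c + p * a) x"
  define \<sigma> where "\<sigma> ms = take c ms @ rotate a (drop c ms)" for ms :: "nat list list"
  define weight where "weight ms = (\<Prod>m\<leftarrow>ms. f m)" for ms
  define P where "P = (SIGMA (u, v):vec_splits N p x. vec_compositions N c u \<times> vec_compositions N a v)"
  have mset_\<sigma>: "mset (\<sigma> ms) = mset ms" for ms
  proof -
    have "mset (\<sigma> ms) = mset (take c ms) + mset (drop c ms)"
      by (simp add: \<sigma>_def mset_rotate)
    also have "\<dots> = mset ms"
      by (simp flip: mset_append)
    finally show ?thesis .
  qed
  have fixed_iff: "\<sigma> ms = ms \<longleftrightarrow> rotate a (drop c ms) = drop c ms" for ms
    by (metis \<sigma>_def append_take_drop_id same_append_eq)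
  have weight_append: "weight (xs @ ys) = weight xs * weight ys" for xs ys
    by (simp add: weight_def)
  have weight_replicate: "weight (concat (replicate n w)) = weight w ^ n" for n w
    by (induction n) (simp_all add: weight_append, simp add: weight_def)
  have "\<sigma> ` S \<subseteq> S"
    using mset_eq_length[OF mset_\<sigma>] mset_eq_setD[OF mset_\<sigma>] vsum_mset_eq[OF mset_\<sigma>]
    by (auto simp: S_def vec_compositions_def)
  moreover have "(\<sigma> ^^ p) ms = ms" if "ms \<in> S" for ms
  proof -
    have len: "length (take c ms) = c" "length (drop c ms) = p * a"
      using that by (auto simp: S_def vec_compositions_def)
    have "(\<sigma> ^^ n) ms = take c ms @ rotate (n * a) (drop c ms)" for n
      using len(1) by (induction n) (simp_all add: \<sigma>_def rotate_rotate)
    then show ?thesis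
      using len(2) by simp
  qed
  moreover have "weight (\<sigma> ms) = weight ms" for ms
    unfolding weight_def by (simp flip: prod_mset_prod_list add: mset_\<sigma>)
  ultimately have "[gbinom N f (c + p * a) x = sum weight {ms \<in> S. \<sigma> ms = ms}] (mod p)"
    unfolding gbinom_altdef weight_def[symmetric] S_def[symmetric]
    by (intro sum_cong_fixed_points[OF p]) (simp_all add: S_def finite_vec_compositions)
  also have "sum weight {ms \<in> S. \<sigma> ms = ms} =
      (\<Sum>((u, v), pre, w)\<in>P. weight (pre @ concat (replicate p w)))"
    using sum_rotation_fixed_vec_compositions[OF p0 x, where c = c and a = a and g = weight]
    by (simp add: S_def P_def fixed_iff)
  also have "\<dots> = (\<Sum>((u, v), pre, w)\<in>P. weight pre * weight w ^ p)"
    by (simp add: weight_append weight_replicate)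
  also have "[\<dots> = (\<Sum>((u, v), pre, w)\<in>P. weight pre * weight w)] (mod p)"
    by (intro cong_sum) (auto simp: split_def intro!: cong_mult cong_pow_prime_self[OF p])
  also have "(\<Sum>((u, v), pre, w)\<in>P. weight pre * weight w) =
      (\<Sum>(u, v)\<in>vec_splits N p x. \<Sum>(pre, w)\<in>vec_compositions N c u \<times> vec_compositions N a v.
         weight pre * weight w)"
    unfolding P_def using p0
    by (simp add: split_def sum.Sigma finite_vec_splits finite_vec_compositions)
  also have "\<dots> = (\<Sum>(u, v)\<in>vec_splits N p x. gbinom N f c u * gbinom N f a v)"
    by (simp add: gbinom_altdef weight_def sum_product sum.cartesian_product)
  finally show ?thesis .
qed

lemma gbinom_base_expansion_cong:
  assumes p: "prime p" and "l \<in> natvecs N"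
  shows "[gbinom N f (\<Sum>j\<le>r. kd j * p ^ j) l =
          (\<Sum>ms\<in>base_decompositions N p r l. \<Prod>i\<le>r. gbinom N f (kd i) (ms ! i))] (mod p)"
  using assms(2)
proof (induction r arbitrary: kd l)
  case 0
  then show ?case
    by (simp add: base_decompositions_0)
next
  case (Suc r)
  let ?k = "\<Sum>j\<le>r. kd (Suc j) * p ^ j"
  have "(\<Sum>j\<le>Suc r. kd j * p ^ j) = kd 0 + p * ?k"
    by (simp add: sum.atMost_Suc_shift sum_distrib_left ac_simps del: sum.atMost_Suc)
  then have "[gbinom N f (\<Sum>j\<le>Suc r. kd j * p ^ j) l =
      (\<Sum>(u, v)\<in>vec_splits N p l. gbinom N f (kd 0) u * gbinom N f ?k v)] (mod p)"
    using gbinom_add_prime_mult_cong[OF p Suc.prems] by simp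
  also have "[(\<Sum>(u, v)\<in>vec_splits N p l. gbinom N f (kd 0) u * gbinom N f ?k v) =
      (\<Sum>(u, v)\<in>vec_splits N p l. gbinom N f (kd 0) u *
      (\<Sum>ms\<in>base_decompositions N p r v. \<Prod>i\<le>r. gbinom N f (kd (Suc i)) (ms ! i)))] (mod p)"
    by (intro cong_sum) (auto simp: vec_splits_def intro!: cong_mult Suc.IH)
  also have "(\<Sum>(u, v)\<in>vec_splits N p l. gbinom N f (kd 0) u *
      (\<Sum>ms\<in>base_decompositions N p r v. \<Prod>i\<le>r. gbinom N f (kd (Suc i)) (ms ! i))) =
      (\<Sum>ms\<in>base_decompositions N p (Suc r) l. \<Prod>i\<le>Suc r. gbinom N f (kd i) (ms ! i))"
    using prime_gt_0_nat[OF p] Suc.prems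
    by (simp add: sum_base_decompositions_Suc prod.atMost_Suc_shift sum_distrib_left split_def
        del: prod.atMost_Suc)
  finally show ?case .
qed

theorem theorem13:
  fixes N :: nat and f :: "nat list \<Rightarrow> nat" and p k r :: nat
    and kd :: "nat \<Rightarrow> nat" and l :: "nat list"
  assumes "N \<ge> 1"
    and "prime p"
    and "\<forall>j\<le>r. kd j < p"
    and "k = (\<Sum>j\<le>r. kd j * p ^ j)"
    and "l \<in> natvecs N"
  shows "[gbinom N f k l =
           (\<Sum>ms \<in> {ms. length ms = Suc r \<and> set ms \<subseteq> natvecs N \<and>
                       vsum N (map (\<lambda>i. vscale (p ^ i) (ms ! i)) [0..<Suc r]) = l}.
              \<Prod>i\<le>r. gbinom N f (kd i) (ms ! i))] (mod p)"
proof -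
  have "{ms. length ms = Suc r \<and> set ms \<subseteq> natvecs N \<and>
           vsum N (map (\<lambda>i. vscale (p ^ i) (ms ! i)) [0..<Suc r]) = l} = base_decompositions N p r l"
    by (auto simp: base_decompositions_def base_vsum_def)
  then show ?thesis
    using gbinom_base_expansion_cong[OF assms(2,5)] assms(4) by simp
qed

end
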